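(* Let $\mathfrak g$ be a finite-dimensional Lie algebra over a field $\mathbb K$ of characteristic zero and let $V=V^2$ be a $\mathfrak g$-module regarded as a dg $\mathfrak g$-module concentrated in degree $2$. A linear map $\alpha_2\colon V^2\to\wedge^2\mathfrak g^\vee\otimes\mathfrak g$ defines a dg Loday–Pirashvili module $\alpha=\{\alpha_2\}$ on $V$ if and only if the corresponding map $\alpha_2\colon\wedge^2\mathfrak g\to\operatorname{Hom}(V^2,\mathfrak g)$ defines an abelian extension of $\mathfrak g$ along $\operatorname{Hom}(V^2,\mathfrak g)$, i.e. is a Chevalley–Eilenberg $2$-cocycle of $\mathfrak g$ with values in the $\mathfrak g$-module $\operatorname{Hom}(V^2,\mathfrak g)$.
   Context: $\operatorname{Hom}(V^2,\mathfrak g)$ is a $\mathfrak g$-module via $(x\cdot\phi)(v)=[x,\phi(v)]-\phi(x\triangleright v)$. For a dg $\mathfrak g$-module $S$, $\Omega_{\mathfrak g}(S)=\wedge^\bullet\mathfrak g^\vee\otimes S$ (degree $p+q$ on $\wedge^p\mathfrak g^\vee\otimes S^q$) carries the total differential $d^S_{\mathrm{tot}}=d^S_{\mathrm{CE}}+d^S$ (Chevalley–Eilenberg differential plus internal differential with sign $(-1)^p$). A dg Loday–Pirashvili module on a non-negative bounded dg $\mathfrak g$-module $V$ is a degree $0$ $\Omega_{\mathfrak g}$-linear map $\alpha\colon\Omega_{\mathfrak g}(V)\to\Omega_{\mathfrak g}(\mathfrak g)$ ($\mathfrak g$ in degree $0$ with adjoint action) with $\alpha\circ d^V_{\mathrm{tot}}=d^{\mathfrak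 g}_{\mathrm{CE}}\circ\alpha$; here $\alpha$ is generated by $\alpha_2$ via $\alpha(\omega\otimes v)=\omega\wedge\alpha_2(v)$. *)

theory Defs
  imports Complex_Main "HOL-Library.Function_Algebras"
begin

text \<open>Cochains of a Lie algebra g with values in a module S are represented as
  alternating multilinear maps g^p \<rightarrow> S, encoded as functions on lists of length p.\<close>

definition del :: "nat \<Rightarrow> 'a list \<Rightarrow> 'a list" where
  "del i xs = take i xs @ drop (Suc i) xs"

definition alt_sign :: "nat \<Rightarrow> 'a::ab_group_add \<Rightarrow> 'a" where
  "alt_sign k a = (if even k then a else - a)"

definition lie_algebra :: "('k::field \<Rightarrow> 'g::ab_group_add \<Rightarrow> 'g) \<Rightarrow> ('g \<Rightarrow> 'g \<Rightarrow> 'g) \<Rightarrow> bool" where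
  "lie_algebra sg br \<longleftrightarrow> vector_space sg
     \<and> (\<forall>x. Vector_Spaces.linear sg sg (br x))
     \<and> (\<forall>y. Vector_Spaces.linear sg sg (\<lambda>x. br x y))
     \<and> (\<forall>x. br x x = 0)
     \<and> (\<forall>x y z. br x (br y z) + br y (br z x) + br z (br x y) = 0)"

definition lie_module :: "('k::field \<Rightarrow> 'g::ab_group_add \<Rightarrow> 'g) \<Rightarrow> ('g \<Rightarrow> 'g \<Rightarrow> 'g)
    \<Rightarrow> ('k \<Rightarrow> 'v::ab_group_add \<Rightarrow> 'v) \<Rightarrow> ('g \<Rightarrow> 'v \<Rightarrow> 'v) \<Rightarrow> bool" where
  "lie_module sg br sv act \<longleftrightarrow> vector_space sv
     \<and> (\<forall>x. Vector_Spaces.linear sv sv (act x))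
     \<and> (\<forall>v. Vector_Spaces.linear sg sv (\<lambda>x. act x v))
     \<and> (\<forall>x y v. act (br x y) v = act x (act y v) - act y (act x v))"

definition cochain :: "('k::field \<Rightarrow> 'g::ab_group_add \<Rightarrow> 'g) \<Rightarrow> ('k \<Rightarrow> 's::ab_group_add \<Rightarrow> 's)
    \<Rightarrow> nat \<Rightarrow> ('g list \<Rightarrow> 's) \<Rightarrow> bool" where
  "cochain sg ss p \<omega> \<longleftrightarrow>
     (\<forall>xs i. length xs = p \<and> i < p \<longrightarrow> Vector_Spaces.linear sg ss (\<lambda>y. \<omega> (xs[i := y])))
   \<and> (\<forall>xs i j. length xs = p \<and> i < j \<and> j < p \<and> xs ! i = xs ! j \<longrightarrow> \<omega> xs = 0)"

definition ce_d :: "('g \<Rightarrow> 'g \<Rightarrow> 'g) \<Rightarrow> ('g \<Rightarrow> 's \<Rightarrow> 's::ab_group_add) \<Rightarrow> nat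
    \<Rightarrow> ('g list \<Rightarrow> 's) \<Rightarrow> 'g list \<Rightarrow> 's" where
  "ce_d br act p \<omega> xs =
     (\<Sum>i<Suc p. alt_sign i (act (xs ! i) (\<omega> (del i xs))))
   + (\<Sum>j<Suc p. \<Sum>i<j. alt_sign (i + j) (\<omega> (br (xs ! i) (xs ! j) # del i (del j xs))))"

text \<open>The Omega_g-linear map alpha generated by alpha_2: alpha(omega tensor v) = omega wedge alpha_2(v),
  applied to a V-valued p-cochain eta (total degree p+2); result is a g-valued (p+2)-cochain.
  The wedge product is the shuffle product; moving the entries i<j to the end has sign (-1)^(i+j+1).\<close>
definition lp_alpha :: "('v \<Rightarrow> 'g list \<Rightarrow> 'g::ab_group_add) \<Rightarrow> nat \<Rightarrow> ('g list \<Rightarrow> 'v)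
    \<Rightarrow> 'g list \<Rightarrow> 'g" where
  "lp_alpha \<alpha>2 p \<eta> xs =
     (\<Sum>j<p + 2. \<Sum>i<j. alt_sign (i + j + 1) (\<alpha>2 (\<eta> (del i (del j xs))) [xs ! i, xs ! j]))"

text \<open>dg Loday--Pirashvili module on V concentrated in degree 2 (internal differential zero, so
  d_tot = d_CE): alpha \<circ> d_tot^V = d_CE^g \<circ> alpha on all of Omega_g(V).\<close>
definition dg_LP_module :: "('k::field \<Rightarrow> 'g::ab_group_add \<Rightarrow> 'g) \<Rightarrow> ('g \<Rightarrow> 'g \<Rightarrow> 'g)
    \<Rightarrow> ('k \<Rightarrow> 'v::ab_group_add \<Rightarrow> 'v) \<Rightarrow> ('g \<Rightarrow> 'v \<Rightarrow> 'v) \<Rightarrow> ('v \<Rightarrow> 'g list \<Rightarrow> 'g) \<Rightarrow> bool" where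
  "dg_LP_module sg br sv act \<alpha>2 \<longleftrightarrow>
     (\<forall>p \<eta> xs. cochain sg sv p \<eta> \<and> length xs = p + 3 \<longrightarrow>
        lp_alpha \<alpha>2 (p + 1) (ce_d br act p \<eta>) xs = ce_d br br (p + 2) (lp_alpha \<alpha>2 p \<eta>) xs)"

definition hom_act :: "('g \<Rightarrow> 'g \<Rightarrow> 'g::ab_group_add) \<Rightarrow> ('g \<Rightarrow> 'v \<Rightarrow> 'v) \<Rightarrow> 'g \<Rightarrow> ('v \<Rightarrow> 'g) \<Rightarrow> ('v \<Rightarrow> 'g)" where
  "hom_act br act x \<phi> = (\<lambda>v. br x (\<phi> v) - \<phi> (act x v))"

definition ce_2cocycle :: "('g \<Rightarrow> 'g \<Rightarrow> 'g) \<Rightarrow> ('g \<Rightarrow> 's \<Rightarrow> 's::ab_group_add) \<Rightarrow> ('g list \<Rightarrow> 's) \<Rightarrow> bool" where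
  "ce_2cocycle br act \<beta> \<longleftrightarrow> (\<forall>x0 x1 x2. ce_d br act 2 \<beta> [x0, x1, x2] = 0)"

end

theory Submission
  imports Defs
begin

(*
  Both directions are read off from one identity.  Let beta be alpha_2 read as a
  Hom(V, g)-valued 2-cochain.  For every V-valued p-cochain eta and arguments
  x_0, ..., x_(p+2), the defect alpha(d eta) - d(alpha eta) equals the sum over a < b < c
  of (-1)^(a+b+c) (d beta)(x_a, x_b, x_c) applied to eta of the remaining arguments.

  To prove it, expand both sides into terms indexed by the pair of arguments fed to
  alpha_2 and the arguments consumed by the differential.  The terms in which a bracket
  [x_a, x_b] is fed to eta occur on both sides and cancel after exchanging the two pairs;
  the remaining terms are indexed by a pair and a third argument and regroup, by the
  underlying 3-element set, into the expansion of d beta.  For p = 0 and constant eta the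
  identity reduces to the single term -(d beta)(x_0, x_1, x_2)(v).
*)

lemma linear_imp_additive: "Vector_Spaces.linear s1 s2 f \<Longrightarrow> additive f"
  by (simp add: additive_def linear_iff_module_hom module_hom.add)

lemma sum_fun_apply: "(sum f A) x = (\<Sum>a\<in>A. f a x)"
  by (induct A rule: infinite_finite_induct) auto

lemma alt_sign_0 [simp]: "alt_sign k 0 = 0"
  by (simp add: alt_sign_def)

lemma alt_sign_add: "alt_sign k (a + b) = alt_sign k a + alt_sign k b"
  by (simp add: alt_sign_def)

lemma alt_sign_sum: "alt_sign k (sum f A) = (\<Sum>x\<in>A. alt_sign k (f x))"
  by (rule additive.sum) (simp add: additive_def alt_sign_add)

lemma alt_sign_alt_sign: "alt_sign k (alt_sign l a) = alt_sign (k + l) a"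
  by (simp add: alt_sign_def)

lemma alt_sign_cong: "even k = even l \<Longrightarrow> a = b \<Longrightarrow> alt_sign k a = alt_sign l b"
  by (simp add: alt_sign_def)

lemma additive_alt_sign: "additive f \<Longrightarrow> f (alt_sign k a) = alt_sign k (f a)"
  by (simp add: alt_sign_def additive.minus)

definition skip1 :: "nat \<Rightarrow> nat \<Rightarrow> nat" where
  "skip1 i k = (if k < i then k else Suc k)"

definition skip2 :: "nat \<Rightarrow> nat \<Rightarrow> nat \<Rightarrow> nat" where
  "skip2 i j k = skip1 j (skip1 i k)"

lemma length_del [simp]: "i < length xs \<Longrightarrow> length (del i xs) = length xs - 1"
  by (simp add: del_def)

lemma nth_del: "k < length xs - 1 \<Longrightarrow> del i xs ! k = xs ! skip1 i k"
  by (auto simp: del_def nth_append min_def skip1_def)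

lemma del_map: "del i (map f xs) = map f (del i xs)"
  by (simp add: del_def take_map drop_map)

lemma del_Cons_0 [simp]: "del 0 (x # xs) = xs"
  by (simp add: del_def)

lemma del_Cons_Suc [simp]: "del (Suc i) (x # xs) = x # del i xs"
  by (simp add: del_def)

lemma distinct_del: "distinct xs \<Longrightarrow> distinct (del i xs)"
  by (simp add: del_def set_take_disj_set_drop_if_distinct)

lemma sorted_del:
  assumes "sorted xs" shows "sorted (del i xs)"
proof -
  have "\<forall>x\<in>set (take i xs). \<forall>y\<in>set (drop i xs). x \<le> y"
    using assms sorted_append[of "take i xs" "drop i xs"] by simp
  moreover have "set (drop (Suc i) xs) \<subseteq> set (drop i xs)"
    by (simp add: set_drop_subset_set_drop)
  ultimately show ?thesis
    using assms unfolding del_def by (auto simp: sorted_wrt_append)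
qed

lemma set_del:
  assumes "distinct xs" "k < length xs"
  shows "set (del k xs) = set xs - {xs ! k}"
proof -
  have split: "xs = take k xs @ xs ! k # drop (Suc k) xs"
    using assms(2) by (simp add: id_take_nth_drop)
  with assms(1) have "distinct (take k xs @ xs ! k # drop (Suc k) xs)" by simp
  then show ?thesis unfolding del_def by (subst (3) split) auto
qed

lemma nth_del_del:
  assumes "i < j" "j < length xs" "k < length xs - 2"
  shows "del i (del j xs) ! k = xs ! skip2 i j k"
  using assms by (simp add: nth_del skip2_def) (auto simp: skip1_def nth_del)

lemma sorted_distinct_eq_nths_upt:
  assumes "sorted ys" "distinct ys" "set ys = {0..<n} - S"
  shows "ys = nths [0..<n] (- S)"
proof -
  have "set (nths [0..<n] (- S)) = {0..<n} - S"
    by (force simp: set_nths)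
  then show ?thesis
    using assms by (intro sorted_distinct_set_unique) (simp_all add: sorted_nths)
qed

lemma del_del_del_skip2:
  assumes "i < j" "j < length xs" "k < length xs - 2"
  shows "del k (del i (del j xs)) = nths xs (- {i, j, skip2 i j k})"
proof -
  have "del k (del i (del j [0..<length xs])) = nths [0..<length xs] (- {i, j, skip2 i j k})"
    using assms
    by (intro sorted_distinct_eq_nths_upt)
      (auto simp: sorted_del distinct_del set_del nth_del skip2_def skip1_def)
  then show ?thesis by (metis del_map map_nth nths_map)
qed

lemma del_del_del_del_skip2:
  assumes "i < j" "j < length xs" "k < l" "l < length xs - 2"
  shows "del k (del l (del i (del j xs))) = nths xs (- {i, j, skip2 i j k, skip2 i j l})"
proof -
  have "del k (del l (del i (del j [0..<length xs])))
      = nths [0..<length xs] (- {i, j, skip2 i j k, skip2 i j l})"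
    using assms
    by (intro sorted_distinct_eq_nths_upt)
      (auto simp: sorted_del distinct_del set_del nth_del skip2_def skip1_def)
  then show ?thesis by (metis del_map map_nth nths_map)
qed

lemma del_del_del_skip1:
  assumes "m < length xs" "i < j" "j < length xs - 1"
  shows "del i (del j (del m xs)) = nths xs (- {skip1 m i, skip1 m j, m})"
proof -
  have "del i (del j (del m [0..<length xs])) = nths [0..<length xs] (- {skip1 m i, skip1 m j, m})"
    using assms
    by (intro sorted_distinct_eq_nths_upt)
      (auto simp: sorted_del distinct_del set_del nth_del skip1_def)
  then show ?thesis by (metis del_map map_nth nths_map)
qed

section \<open>Reindexing sums over index tuples\<close>

definition pair_index_triples :: "nat \<Rightarrow> (nat \<times> nat \<times> nat) set" where
  "pair_index_triples n = {(i, j, c). i < j \<and> j < n \<and> c < n \<and> c \<noteq> i \<and> c \<noteq> j}"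

definition disjoint_pair_pairs :: "nat \<Rightarrow> (nat \<times> nat \<times> nat \<times> nat) set" where
  "disjoint_pair_pairs n =
     {(i, j, a, b). i < j \<and> j < n \<and> a < b \<and> b < n \<and> a \<noteq> i \<and> a \<noteq> j \<and> b \<noteq> i \<and> b \<noteq> j}"

definition ordered_triples :: "nat \<Rightarrow> (nat \<times> nat \<times> nat) set" where
  "ordered_triples n = {(a, b, c). a < b \<and> b < c \<and> c < n}"

definition unskip1 :: "nat \<Rightarrow> nat \<Rightarrow> nat" where
  "unskip1 i c = (if i < c then c - 1 else c)"

definition unskip2 :: "nat \<Rightarrow> nat \<Rightarrow> nat \<Rightarrow> nat" where
  "unskip2 i j c = unskip1 i (unskip1 j c)"

lemma sum_Sigma3:
  assumes "finite A" "\<And>x. finite (B x)" "\<And>x y. finite (C x y)"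
  shows "(\<Sum>x\<in>A. \<Sum>y\<in>B x. \<Sum>z\<in>C x y. f x y z)
       = (\<Sum>(x, y, z)\<in>(SIGMA x:A. SIGMA y:B x. C x y). f x y z)"
proof -
  have "(\<Sum>x\<in>A. \<Sum>y\<in>B x. \<Sum>z\<in>C x y. f x y z) = (\<Sum>x\<in>A. \<Sum>(y, z)\<in>(SIGMA y:B x. C x y). f x y z)"
    by (intro sum.cong refl sum.Sigma) (auto intro: assms)
  also have "\<dots> = (\<Sum>(x, y, z)\<in>(SIGMA x:A. SIGMA y:B x. C x y). f x y z)"
    by (rule sum.Sigma) (auto intro: assms)
  finally show ?thesis .
qed

lemma sum_skip2_eq_sum_pair_index_triples:
  "(\<Sum>j<n. \<Sum>i<j. \<Sum>k<n - 2. F i j (skip2 i j k)) = (\<Sum>(i, j, c)\<in>pair_index_triples n. F i j c)"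
  apply (subst sum_Sigma3, simp_all)
  apply (rule sum.reindex_bij_witness[where i="\<lambda>(i, j, c). (j, i, unskip2 i j c)"
        and j="\<lambda>(j, i, k). (i, j, skip2 i j k)"])
  by (auto simp: pair_index_triples_def skip2_def skip1_def unskip2_def unskip1_def split: if_splits)

lemma sum_skip1_eq_sum_pair_index_triples:
  "(\<Sum>c<n. \<Sum>j<n - 1. \<Sum>i<j. F (skip1 c i) (skip1 c j) c) = (\<Sum>(i, j, c)\<in>pair_index_triples n. F i j c)"
  apply (subst sum_Sigma3, simp_all)
  apply (rule sum.reindex_bij_witness[where i="\<lambda>(i, j, c). (c, unskip1 c j, unskip1 c i)"
        and j="\<lambda>(c, j, i). (skip1 c i, skip1 c j, c)"])
  by (auto simp: pair_index_triples_def skip1_def unskip1_def split: if_splits)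

lemma sum_skip2_eq_sum_disjoint_pair_pairs:
  "(\<Sum>j<n. \<Sum>i<j. \<Sum>l<n - 2. \<Sum>k<l. F i j (skip2 i j k) (skip2 i j l))
   = (\<Sum>(i, j, a, b)\<in>disjoint_pair_pairs n. F i j a b)"
proof -
  have "(\<Sum>j<n. \<Sum>i<j. \<Sum>l<n - 2. \<Sum>k<l. F i j (skip2 i j k) (skip2 i j l))
      = (\<Sum>j<n. \<Sum>i<j. \<Sum>(l, k)\<in>(SIGMA l:{..<n - 2}. {..<l}). F i j (skip2 i j k) (skip2 i j l))"
    by (intro sum.cong refl sum.Sigma) auto
  also have "\<dots> = (\<Sum>(j, i, l, k)\<in>(SIGMA j:{..<n}. SIGMA i:{..<j}. SIGMA l:{..<n - 2}. {..<l}).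
                      F i j (skip2 i j k) (skip2 i j l))"
    by (subst sum_Sigma3) (auto simp: split_def)
  also have "\<dots> = (\<Sum>(i, j, a, b)\<in>disjoint_pair_pairs n. F i j a b)"
    by (rule sum.reindex_bij_witness[where i="\<lambda>(i, j, a, b). (j, i, unskip2 i j b, unskip2 i j a)"
          and j="\<lambda>(j, i, l, k). (i, j, skip2 i j k, skip2 i j l)"])
      (auto simp: disjoint_pair_pairs_def skip2_def skip1_def unskip2_def unskip1_def split: if_splits)
  finally show ?thesis .
qed

lemma sum_disjoint_pair_pairs_swap:
  "(\<Sum>(i, j, a, b)\<in>disjoint_pair_pairs n. F i j a b) = (\<Sum>(i, j, a, b)\<in>disjoint_pair_pairs n. F a b i j)"
  by (rule sum.reindex_bij_witness[where i="\<lambda>(i, j, a, b). (a, b, i, j)" and j="\<lambda>(i, j, a, b). (a, b, i, j)"])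
    (auto simp: disjoint_pair_pairs_def)

lemma sum_pair_index_triples_eq_sum_ordered_triples:
  "(\<Sum>(i, j, c)\<in>pair_index_triples n. H i j c) = (\<Sum>(a, b, c)\<in>ordered_triples n. H b c a + H a c b + H a b c)"
proof -
  define unsort_triple :: "(nat \<times> nat \<times> nat) \<times> nat \<Rightarrow> nat \<times> nat \<times> nat" where
    "unsort_triple = (\<lambda>((a, b, c), t). if t = 0 then (b, c, a) else if t = 1 then (a, c, b) else (a, b, c))"
  define sort_triple :: "nat \<times> nat \<times> nat \<Rightarrow> (nat \<times> nat \<times> nat) \<times> nat" where
    "sort_triple = (\<lambda>(i, j, c).
       if c < i then ((c, i, j), 0) else if c < j then ((i, c, j), 1) else ((i, j, c), 2))"
  have "(\<Sum>(i, j, c)\<in>pair_index_triples n. H i j c)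
      = (\<Sum>x\<in>ordered_triples n \<times> {..<3}. case unsort_triple x of (i, j, c) \<Rightarrow> H i j c)"
    by (rule sum.reindex_bij_witness[where i=unsort_triple and j=sort_triple])
      (auto simp: pair_index_triples_def ordered_triples_def sort_triple_def unsort_triple_def split: if_splits)
  also have "\<dots> = (\<Sum>y\<in>ordered_triples n. \<Sum>t<3. case unsort_triple (y, t) of (i, j, c) \<Rightarrow> H i j c)"
    by (simp add: sum.cartesian_product)
  also have "\<dots> = (\<Sum>(a, b, c)\<in>ordered_triples n. H b c a + H a c b + H a b c)"
    by (rule sum.cong) (auto simp: unsort_triple_def numeral_3_eq_3)
  finally show ?thesis .
qed

lemma sum_triangle_Suc_Suc:
  "(\<Sum>j<Suc (Suc q). \<Sum>i<j. f i j)
   = (\<Sum>k<Suc q. f 0 (Suc k)) + (\<Sum>l<Suc q. \<Sum>k<l. f (Suc k) (Suc l) :: 'a::comm_monoid_add)"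
  by (simp only: sum.lessThan_Suc_shift sum.distrib) simp

section \<open>The failure of alpha to commute with the differentials\<close>

lemma ce_d_2:
  "ce_d br (hom_act br act) 2 (\<lambda>xs v. \<alpha>2 v xs) [x, y, z] v =
     (br x (\<alpha>2 v [y, z]) - \<alpha>2 (act x v) [y, z]) - (br y (\<alpha>2 v [x, z]) - \<alpha>2 (act y v) [x, z])
   + (br z (\<alpha>2 v [x, y]) - \<alpha>2 (act z v) [x, y])
   - \<alpha>2 v [br x y, z] + \<alpha>2 v [br x z, y] - \<alpha>2 v [br y z, x]"
proof -
  have "\<not> Suc (Suc 0) dvd Suc (Suc (Suc 0))"
    by presburger
  then show ?thesis
    by (simp add: ce_d_def hom_act_def sum_fun_apply numeral_2_eq_2 alt_sign_def del_def)
qed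

locale lp_expansion =
  fixes br :: "'g \<Rightarrow> 'g \<Rightarrow> 'g::ab_group_add"
    and act :: "'g \<Rightarrow> 'v \<Rightarrow> 'v::ab_group_add"
    and \<alpha>2 :: "'v \<Rightarrow> 'g list \<Rightarrow> 'g"
  assumes additive_\<alpha>2: "additive (\<lambda>v. \<alpha>2 v [x, y])"
    and additive_br: "additive (br x)"
begin

lemma \<alpha>2_add: "\<alpha>2 (u + v) [x, y] = \<alpha>2 u [x, y] + \<alpha>2 v [x, y]"
  using additive.add[OF additive_\<alpha>2] by simp

lemma \<alpha>2_sum: "\<alpha>2 (sum f A) [x, y] = (\<Sum>a\<in>A. \<alpha>2 (f a) [x, y])"
  using additive.sum[OF additive_\<alpha>2] by simp

lemma \<alpha>2_alt_sign: "\<alpha>2 (alt_sign k v) [x, y] = alt_sign k (\<alpha>2 v [x, y])"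
  using additive_alt_sign[OF additive_\<alpha>2] by simp

lemma br_sum: "br x (sum f A) = (\<Sum>a\<in>A. br x (f a))"
  using additive.sum[OF additive_br] by simp

lemma br_alt_sign: "br x (alt_sign k u) = alt_sign k (br x u)"
  using additive_alt_sign[OF additive_br] by simp

(* The signs record positions after deletion: once the entries i and j are removed,
   entry c sits at position c - of_bool (i < c) - of_bool (j < c). *)

definition alpha_act_term :: "('g list \<Rightarrow> 'v) \<Rightarrow> 'g list \<Rightarrow> nat \<Rightarrow> nat \<Rightarrow> nat \<Rightarrow> 'g" where
  "alpha_act_term \<eta> xs i j c = alt_sign (i + j + 1 + c + of_bool (i < c) + of_bool (j < c))
     (\<alpha>2 (act (xs ! c) (\<eta> (nths xs (- {i, j, c})))) [xs ! i, xs ! j])"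

definition act_alpha_term :: "('g list \<Rightarrow> 'v) \<Rightarrow> 'g list \<Rightarrow> nat \<Rightarrow> nat \<Rightarrow> nat \<Rightarrow> 'g" where
  "act_alpha_term \<eta> xs i j c = alt_sign (i + j + 1 + c + of_bool (c < i) + of_bool (c < j))
     (br (xs ! c) (\<alpha>2 (\<eta> (nths xs (- {i, j, c}))) [xs ! i, xs ! j]))"

definition alpha_bracket_term :: "('g list \<Rightarrow> 'v) \<Rightarrow> 'g list \<Rightarrow> nat \<Rightarrow> nat \<Rightarrow> nat \<Rightarrow> 'g" where
  "alpha_bracket_term \<eta> xs i j c = alt_sign (i + j + c + of_bool (i < c) + of_bool (j < c))
     (\<alpha>2 (\<eta> (nths xs (- {i, j, c}))) [br (xs ! i) (xs ! j), xs ! c])"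

definition eta_bracket_term :: "('g list \<Rightarrow> 'v) \<Rightarrow> 'g list \<Rightarrow> nat \<Rightarrow> nat \<Rightarrow> nat \<Rightarrow> nat \<Rightarrow> 'g" where
  "eta_bracket_term \<eta> xs i j a b =
     alt_sign (i + j + a + b + 1 + of_bool (i < a) + of_bool (j < a) + of_bool (i < b) + of_bool (j < b))
       (\<alpha>2 (\<eta> (br (xs ! i) (xs ! j) # nths xs (- {i, j, a, b}))) [xs ! a, xs ! b])"

lemma alpha_ce_d_del_del:
  assumes "i < j" "j < length xs" "length xs = p + 3"
  shows "alt_sign (i + j + 1) (\<alpha>2 (ce_d br act p \<eta> (del i (del j xs))) [xs ! i, xs ! j])
    = (\<Sum>k<Suc p. alpha_act_term \<eta> xs i j (skip2 i j k))
    + (\<Sum>l<Suc p. \<Sum>k<l. eta_bracket_term \<eta> xs (skip2 i j k) (skip2 i j l) i j)"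
proof -
  let ?ys = "del i (del j xs)"
  have "alt_sign (i + j + 1) (\<alpha>2 (ce_d br act p \<eta> ?ys) [xs ! i, xs ! j])
    = (\<Sum>k<Suc p. alt_sign (i + j + 1) (alt_sign k (\<alpha>2 (act (?ys ! k) (\<eta> (del k ?ys))) [xs ! i, xs ! j])))
    + (\<Sum>l<Suc p. \<Sum>k<l. alt_sign (i + j + 1) (alt_sign (k + l)
         (\<alpha>2 (\<eta> (br (?ys ! k) (?ys ! l) # del k (del l ?ys))) [xs ! i, xs ! j])))"
    unfolding ce_d_def by (simp only: \<alpha>2_add \<alpha>2_sum \<alpha>2_alt_sign alt_sign_add alt_sign_sum)
  also have "\<dots> = (\<Sum>k<Suc p. alpha_act_term \<eta> xs i j (skip2 i j k))
    + (\<Sum>l<Suc p. \<Sum>k<l. eta_bracket_term \<eta> xs (skip2 i j k) (skip2 i j l) i j)"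
    unfolding alpha_act_term_def eta_bracket_term_def alt_sign_alt_sign
  proof (intro arg_cong2[where f="(+)"] sum.cong refl alt_sign_cong)
    fix k assume "k \<in> {..<Suc p}"
    with assms show "even (i + j + 1 + k)
        = even (i + j + 1 + skip2 i j k + of_bool (i < skip2 i j k) + of_bool (j < skip2 i j k))"
      and "\<alpha>2 (act (?ys ! k) (\<eta> (del k ?ys))) [xs ! i, xs ! j]
        = \<alpha>2 (act (xs ! skip2 i j k) (\<eta> (nths xs (- {i, j, skip2 i j k})))) [xs ! i, xs ! j]"
      by (auto simp: skip2_def skip1_def nth_del_del del_del_del_skip2)
  next
    fix l k assume "l \<in> {..<Suc p}" "k \<in> {..<l}"
    with assms show "even (i + j + 1 + (k + l)) = even (skip2 i j k + skip2 i j l + i + j + 1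
        + of_bool (skip2 i j k < i) + of_bool (skip2 i j l < i) + of_bool (skip2 i j k < j) + of_bool (skip2 i j l < j))"
      and "\<alpha>2 (\<eta> (br (?ys ! k) (?ys ! l) # del k (del l ?ys))) [xs ! i, xs ! j]
        = \<alpha>2 (\<eta> (br (xs ! skip2 i j k) (xs ! skip2 i j l) # nths xs (- {skip2 i j k, skip2 i j l, i, j}))) [xs ! i, xs ! j]"
      by (auto simp: skip2_def skip1_def nth_del_del del_del_del_del_skip2 insert_commute)
  qed
  finally show ?thesis .
qed

lemma br_lp_alpha_del:
  assumes "m < length xs" "length xs = p + 3"
  shows "alt_sign m (br (xs ! m) (lp_alpha \<alpha>2 p \<eta> (del m xs)))
    = (\<Sum>j<p + 2. \<Sum>i<j. act_alpha_term \<eta> xs (skip1 m i) (skip1 m j) m)"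
  unfolding lp_alpha_def br_sum br_alt_sign alt_sign_sum act_alpha_term_def alt_sign_alt_sign
proof (intro sum.cong refl alt_sign_cong)
  fix j i assume "j \<in> {..<p + 2}" "i \<in> {..<j}"
  with assms show "even (m + (i + j + 1))
      = even (skip1 m i + skip1 m j + 1 + m + of_bool (m < skip1 m i) + of_bool (m < skip1 m j))"
    and "br (xs ! m) (\<alpha>2 (\<eta> (del i (del j (del m xs)))) [del m xs ! i, del m xs ! j])
      = br (xs ! m) (\<alpha>2 (\<eta> (nths xs (- {skip1 m i, skip1 m j, m}))) [xs ! skip1 m i, xs ! skip1 m j])"
    by (auto simp: skip1_def nth_del del_del_del_skip1)
qed

lemma lp_alpha_bracket_del_del:
  assumes "i < j" "j < length xs" "length xs = p + 3"
  shows "alt_sign (i + j) (lp_alpha \<alpha>2 p \<eta> (br (xs ! i) (xs ! j) # del i (del j xs)))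
    = (\<Sum>k<Suc p. alpha_bracket_term \<eta> xs i j (skip2 i j k))
    + (\<Sum>l<Suc p. \<Sum>k<l. eta_bracket_term \<eta> xs i j (skip2 i j k) (skip2 i j l))"
  unfolding lp_alpha_def add_2_eq_Suc' sum_triangle_Suc_Suc
    alt_sign_add alt_sign_sum alpha_bracket_term_def eta_bracket_term_def alt_sign_alt_sign
proof (intro arg_cong2[where f="(+)"] sum.cong refl alt_sign_cong)
  fix k assume "k \<in> {..<Suc p}"
  with assms show "even (i + j + (0 + Suc k + 1))
      = even (i + j + skip2 i j k + of_bool (i < skip2 i j k) + of_bool (j < skip2 i j k))"
    and "\<alpha>2 (\<eta> (del 0 (del (Suc k) (br (xs ! i) (xs ! j) # del i (del j xs)))))
          [(br (xs ! i) (xs ! j) # del i (del j xs)) ! 0, (br (xs ! i) (xs ! j) # del i (del j xs)) ! Suc k]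
      = \<alpha>2 (\<eta> (nths xs (- {i, j, skip2 i j k}))) [br (xs ! i) (xs ! j), xs ! skip2 i j k]"
    by (auto simp: skip2_def skip1_def nth_del_del del_del_del_skip2)
next
  fix l k assume "l \<in> {..<Suc p}" "k \<in> {..<l}"
  with assms show "even (i + j + (Suc k + Suc l + 1))
      = even (i + j + skip2 i j k + skip2 i j l + 1 + of_bool (i < skip2 i j k) + of_bool (j < skip2 i j k)
          + of_bool (i < skip2 i j l) + of_bool (j < skip2 i j l))"
    and "\<alpha>2 (\<eta> (del (Suc k) (del (Suc l) (br (xs ! i) (xs ! j) # del i (del j xs)))))
          [(br (xs ! i) (xs ! j) # del i (del j xs)) ! Suc k, (br (xs ! i) (xs ! j) # del i (del j xs)) ! Suc l]
      = \<alpha>2 (\<eta> (br (xs ! i) (xs ! j) # nths xs (- {i, j, skip2 i j k, skip2 i j l})))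
          [xs ! skip2 i j k, xs ! skip2 i j l]"
    by (auto simp: skip2_def skip1_def nth_del_del del_del_del_del_skip2)
qed

lemma lp_alpha_ce_d_expansion:
  assumes "length xs = p + 3"
  shows "lp_alpha \<alpha>2 (p + 1) (ce_d br act p \<eta>) xs
    = (\<Sum>(i, j, c)\<in>pair_index_triples (p + 3). alpha_act_term \<eta> xs i j c)
    + (\<Sum>(i, j, a, b)\<in>disjoint_pair_pairs (p + 3). eta_bracket_term \<eta> xs a b i j)"
proof -
  have "lp_alpha \<alpha>2 (p + 1) (ce_d br act p \<eta>) xs
    = (\<Sum>j<p + 3. \<Sum>i<j. alt_sign (i + j + 1) (\<alpha>2 (ce_d br act p \<eta> (del i (del j xs))) [xs ! i, xs ! j]))"
    unfolding lp_alpha_def by (simp only: add.assoc one_plus_numeral semiring_norm)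
  also have "\<dots> = (\<Sum>j<p + 3. \<Sum>i<j. (\<Sum>k<Suc p. alpha_act_term \<eta> xs i j (skip2 i j k))
        + (\<Sum>l<Suc p. \<Sum>k<l. eta_bracket_term \<eta> xs (skip2 i j k) (skip2 i j l) i j))"
    using assms by (intro sum.cong refl alpha_ce_d_del_del) auto
  also have "\<dots> = (\<Sum>(i, j, c)\<in>pair_index_triples (p + 3). alpha_act_term \<eta> xs i j c)
    + (\<Sum>(i, j, a, b)\<in>disjoint_pair_pairs (p + 3). eta_bracket_term \<eta> xs a b i j)"
    using sum_skip2_eq_sum_pair_index_triples[of "alpha_act_term \<eta> xs" "p + 3"]
      sum_skip2_eq_sum_disjoint_pair_pairs[of "\<lambda>i j a b. eta_bracket_term \<eta> xs a b i j" "p + 3"]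
    by (simp add: sum.distrib)
  finally show ?thesis .
qed

lemma ce_d_lp_alpha_expansion:
  assumes "length xs = p + 3"
  shows "ce_d br br (p + 2) (lp_alpha \<alpha>2 p \<eta>) xs
    = (\<Sum>(i, j, c)\<in>pair_index_triples (p + 3). act_alpha_term \<eta> xs i j c)
    + (\<Sum>(i, j, c)\<in>pair_index_triples (p + 3). alpha_bracket_term \<eta> xs i j c)
    + (\<Sum>(i, j, a, b)\<in>disjoint_pair_pairs (p + 3). eta_bracket_term \<eta> xs i j a b)"
proof -
  have "ce_d br br (p + 2) (lp_alpha \<alpha>2 p \<eta>) xs
    = (\<Sum>m<p + 3. \<Sum>j<p + 3 - 1. \<Sum>i<j. act_alpha_term \<eta> xs (skip1 m i) (skip1 m j) m)
    + (\<Sum>j<p + 3. \<Sum>i<j. (\<Sum>k<Suc p. alpha_bracket_term \<eta> xs i j (skip2 i j k))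
        + (\<Sum>l<Suc p. \<Sum>k<l. eta_bracket_term \<eta> xs i j (skip2 i j k) (skip2 i j l)))"
    unfolding ce_d_def using assms
    by (intro arg_cong2[where f="(+)"] sum.cong) (auto simp: br_lp_alpha_del lp_alpha_bracket_del_del)
  also have "\<dots> = (\<Sum>(i, j, c)\<in>pair_index_triples (p + 3). act_alpha_term \<eta> xs i j c)
    + (\<Sum>(i, j, c)\<in>pair_index_triples (p + 3). alpha_bracket_term \<eta> xs i j c)
    + (\<Sum>(i, j, a, b)\<in>disjoint_pair_pairs (p + 3). eta_bracket_term \<eta> xs i j a b)"
    using sum_skip1_eq_sum_pair_index_triples[of "act_alpha_term \<eta> xs" "p + 3"]
      sum_skip2_eq_sum_pair_index_triples[of "alpha_bracket_term \<eta> xs" "p + 3"]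
      sum_skip2_eq_sum_disjoint_pair_pairs[of "eta_bracket_term \<eta> xs" "p + 3"]
    by (simp add: sum.distrib add.assoc)
  finally show ?thesis .
qed

lemma ce_d_2_as_pair_index_terms:
  fixes \<eta> :: "'g list \<Rightarrow> 'v" and xs :: "'g list"
  assumes "a < b" "b < c"
  shows "(alpha_act_term \<eta> xs b c a - act_alpha_term \<eta> xs b c a - alpha_bracket_term \<eta> xs b c a)
    + (alpha_act_term \<eta> xs a c b - act_alpha_term \<eta> xs a c b - alpha_bracket_term \<eta> xs a c b)
    + (alpha_act_term \<eta> xs a b c - act_alpha_term \<eta> xs a b c - alpha_bracket_term \<eta> xs a b c)
    = alt_sign (a + b + c) (ce_d br (hom_act br act) 2 (\<lambda>ys v. \<alpha>2 v ys)
        [xs ! a, xs ! b, xs ! c] (\<eta> (nths xs (- {a, b, c}))))"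
  using assms unfolding ce_d_2
  unfolding alpha_act_term_def act_alpha_term_def alpha_bracket_term_def
  by (cases "even a"; cases "even b"; cases "even c")
    (simp_all add: alt_sign_def insert_commute algebra_simps)

lemma lp_alpha_defect:
  assumes "length xs = p + 3"
  shows "lp_alpha \<alpha>2 (p + 1) (ce_d br act p \<eta>) xs - ce_d br br (p + 2) (lp_alpha \<alpha>2 p \<eta>) xs
    = (\<Sum>(a, b, c)\<in>ordered_triples (p + 3). alt_sign (a + b + c)
        (ce_d br (hom_act br act) 2 (\<lambda>ys v. \<alpha>2 v ys) [xs ! a, xs ! b, xs ! c] (\<eta> (nths xs (- {a, b, c})))))"
proof -
  have "(\<Sum>(i, j, a, b)\<in>disjoint_pair_pairs (p + 3). eta_bracket_term \<eta> xs a b i j)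
      = (\<Sum>(i, j, a, b)\<in>disjoint_pair_pairs (p + 3). eta_bracket_term \<eta> xs i j a b)"
    by (rule sum_disjoint_pair_pairs_swap)
  then have "lp_alpha \<alpha>2 (p + 1) (ce_d br act p \<eta>) xs - ce_d br br (p + 2) (lp_alpha \<alpha>2 p \<eta>) xs
    = (\<Sum>(i, j, c)\<in>pair_index_triples (p + 3). alpha_act_term \<eta> xs i j c)
    - (\<Sum>(i, j, c)\<in>pair_index_triples (p + 3). act_alpha_term \<eta> xs i j c)
    - (\<Sum>(i, j, c)\<in>pair_index_triples (p + 3). alpha_bracket_term \<eta> xs i j c)"
    unfolding lp_alpha_ce_d_expansion[OF assms] ce_d_lp_alpha_expansion[OF assms] by simp
  also have "\<dots> = (\<Sum>(i, j, c)\<in>pair_index_triples (p + 3).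
         alpha_act_term \<eta> xs i j c - act_alpha_term \<eta> xs i j c - alpha_bracket_term \<eta> xs i j c)"
    by (simp add: sum_subtractf split_def)
  also have "\<dots> = (\<Sum>(a, b, c)\<in>ordered_triples (p + 3). alt_sign (a + b + c)
        (ce_d br (hom_act br act) 2 (\<lambda>ys v. \<alpha>2 v ys) [xs ! a, xs ! b, xs ! c] (\<eta> (nths xs (- {a, b, c})))))"
    unfolding sum_pair_index_triples_eq_sum_ordered_triples
    by (intro sum.cong refl) (auto simp: ordered_triples_def ce_d_2_as_pair_index_terms)
  finally show ?thesis .
qed

lemma ce_2cocycle_if_dg_LP_module:
  assumes "dg_LP_module sg br sv act \<alpha>2"
  shows "ce_2cocycle br (hom_act br act) (\<lambda>xs v. \<alpha>2 v xs)"
  unfolding ce_2cocycle_def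
proof (intro allI ext)
  fix x0 x1 x2 :: 'g and v :: 'v
  let ?xs = "[x0, x1, x2]"
  have len: "length ?xs = 0 + 3"
    by simp
  have "cochain sg sv 0 (\<lambda>_. v)"
    by (simp add: cochain_def)
  with assms len have "lp_alpha \<alpha>2 (0 + 1) (ce_d br act 0 (\<lambda>_. v)) ?xs
      = ce_d br br (0 + 2) (lp_alpha \<alpha>2 0 (\<lambda>_. v)) ?xs"
    unfolding dg_LP_module_def by blast
  then have "lp_alpha \<alpha>2 (0 + 1) (ce_d br act 0 (\<lambda>_. v)) ?xs
      - ce_d br br (0 + 2) (lp_alpha \<alpha>2 0 (\<lambda>_. v)) ?xs = 0"
    by (simp only: diff_self)
  then have "(\<Sum>(a, b, c)\<in>ordered_triples (0 + 3). alt_sign (a + b + c)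
      (ce_d br (hom_act br act) 2 (\<lambda>ys v. \<alpha>2 v ys) [?xs ! a, ?xs ! b, ?xs ! c] v)) = 0"
    unfolding lp_alpha_defect[OF len] .
  moreover have "ordered_triples (0 + 3) = {(0, 1, 2)}"
    by (auto simp: ordered_triples_def)
  ultimately show "ce_d br (hom_act br act) 2 (\<lambda>xs v. \<alpha>2 v xs) ?xs v = 0 v"
    by (simp add: alt_sign_def)
qed

lemma dg_LP_module_if_ce_2cocycle:
  assumes "ce_2cocycle br (hom_act br act) (\<lambda>xs v. \<alpha>2 v xs)"
  shows "dg_LP_module sg br sv act \<alpha>2"
  unfolding dg_LP_module_def
proof (intro allI impI)
  fix p \<eta> and xs :: "'g list"
  assume "cochain sg sv p \<eta> \<and> length xs = p + 3"
  moreover have "ce_d br (hom_act br act) 2 (\<lambda>xs v. \<alpha>2 v xs) [x, y, z] w = 0" for x y z w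
    using assms unfolding ce_2cocycle_def by simp
  ultimately have "lp_alpha \<alpha>2 (p + 1) (ce_d br act p \<eta>) xs - ce_d br br (p + 2) (lp_alpha \<alpha>2 p \<eta>) xs = 0"
    by (subst lp_alpha_defect) simp_all
  then show "lp_alpha \<alpha>2 (p + 1) (ce_d br act p \<eta>) xs = ce_d br br (p + 2) (lp_alpha \<alpha>2 p \<eta>) xs"
    by simp
qed

end

theorem corollary2p5:
  fixes sg :: "'k::field_char_0 \<Rightarrow> 'g::ab_group_add \<Rightarrow> 'g"
    and br :: "'g \<Rightarrow> 'g \<Rightarrow> 'g"
    and sv :: "'k \<Rightarrow> 'v::ab_group_add \<Rightarrow> 'v"
    and act :: "'g \<Rightarrow> 'v \<Rightarrow> 'v"
    and \<alpha>2 :: "'v \<Rightarrow> 'g list \<Rightarrow> 'g"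
  assumes "lie_algebra sg br"
    and "\<exists>B. finite_dimensional_vector_space sg B"
    and "lie_module sg br sv act"
    and "\<forall>v. cochain sg sg 2 (\<alpha>2 v)"
    and "\<forall>x y. Vector_Spaces.linear sv sg (\<lambda>v. \<alpha>2 v [x, y])"
  shows "dg_LP_module sg br sv act \<alpha>2 \<longleftrightarrow>
         ce_2cocycle br (hom_act br act) (\<lambda>xs v. \<alpha>2 v xs)"
proof -
  interpret lp_expansion br act \<alpha>2
  proof (rule lp_expansion.intro)
    show "additive (\<lambda>v. \<alpha>2 v [x, y])" for x y
      using assms(5) by (blast intro: linear_imp_additive)
    show "additive (br x)" for x
      using assms(1) unfolding lie_algebra_def by (blast intro: linear_imp_additive)
  qed
  show ?thesis
    using ce_2cocycle_if_dg_LP_module dg_LP_module_if_ce_2cocycle by blast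
qed

end
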